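(* Let $A$ be a T-brace. If the additive group of the $\star$-center $\zeta(\star,A)$ of $A$ is torsion-free, then the upper $\star$-hypercenter $\zeta_\infty(\star,A)$ of $A$ coincides with $\zeta(\star,A)$.
   Context: A (left) brace is a set $A$ with two operations $+$ and $\cdot$ such that $(A,+)$ is an abelian group, $(A,\cdot)$ is a group, and $a(b+c)=ab+ac-a$ for all $a,b,c\in A$; the identities of both groups coincide (denoted $0$). Put $a\star b=ab-a-b$. A subbrace is a subset which is a subgroup of both $(A,+)$ and $(A,\cdot)$. A subbrace $L$ is an ideal of $A$ if $a\star z\in L$ and $z\star a\in L$ for all $a\in A$, $z\in L$; then the quotient brace $A/L$ is defined naturally. A brace $A$ is a T-brace if being an ideal is transitive: whenever $I$ is an ideal of $J$ and $J$ is an ideal of $A$, $I$ is an ideal of $A$. The $\star$-center is $\zeta(\star,A)=\{a\in A: a\star x=x\star a=0 \text{ for all } x\in A\}$, an ideal of $A$. The upper $\star$-central series is defined by $\zeta_0(\star,A)=0$, $\zeta_1(\star,A)=\zeta(\star,A)$, $\zeta_{\alpha+1}(\star,A)/\zeta_\alpha(\star,A)=\zeta(\star,A/\zeta_\alpha(\star,A))$, and $\zeta_\lambda(\star,A)=\bigcup_{\mu<\lambda}\zeta_\mu(\star,A)$ for limit ordinals $\lambda$; its last term $\zeta_\infty(\star,A)$ is the upper $\star$-hypercenter. *)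

theory Defs
  imports Main
begin

record 'a brace_str =
  carrier :: "'a set"
  add :: "'a \<Rightarrow> 'a \<Rightarrow> 'a"
  neg :: "'a \<Rightarrow> 'a"
  mul :: "'a \<Rightarrow> 'a \<Rightarrow> 'a"
  zero :: 'a

definition is_brace :: "('a, 'b) brace_str_scheme \<Rightarrow> bool" where
  "is_brace A \<longleftrightarrow>
     zero A \<in> carrier A \<and>
     (\<forall>a\<in>carrier A. \<forall>b\<in>carrier A. add A a b \<in> carrier A) \<and>
     (\<forall>a\<in>carrier A. neg A a \<in> carrier A) \<and>
     (\<forall>a\<in>carrier A. \<forall>b\<in>carrier A. mul A a b \<in> carrier A) \<and>
     (\<forall>a\<in>carrier A. \<forall>b\<in>carrier A. \<forall>c\<in>carrier A. add A (add A a b) c = add A a (add A b c)) \<and>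
     (\<forall>a\<in>carrier A. \<forall>b\<in>carrier A. add A a b = add A b a) \<and>
     (\<forall>a\<in>carrier A. add A a (zero A) = a) \<and>
     (\<forall>a\<in>carrier A. add A a (neg A a) = zero A) \<and>
     (\<forall>a\<in>carrier A. \<forall>b\<in>carrier A. \<forall>c\<in>carrier A. mul A (mul A a b) c = mul A a (mul A b c)) \<and>
     (\<forall>a\<in>carrier A. mul A a (zero A) = a \<and> mul A (zero A) a = a) \<and>
     (\<forall>a\<in>carrier A. \<exists>b\<in>carrier A. mul A a b = zero A \<and> mul A b a = zero A) \<and>
     (\<forall>a\<in>carrier A. \<forall>b\<in>carrier A. \<forall>c\<in>carrier A.
        mul A a (add A b c) = add A (add A (mul A a b) (mul A a c)) (neg A a))"

definition star :: "('a, 'b) brace_str_scheme \<Rightarrow> 'a \<Rightarrow> 'a \<Rightarrow> 'a" where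
  "star A a b = add A (add A (mul A a b) (neg A a)) (neg A b)"

definition subbrace :: "('a, 'b) brace_str_scheme \<Rightarrow> 'a set \<Rightarrow> bool" where
  "subbrace A L \<longleftrightarrow> L \<subseteq> carrier A \<and> zero A \<in> L \<and>
     (\<forall>a\<in>L. \<forall>b\<in>L. add A a b \<in> L) \<and> (\<forall>a\<in>L. neg A a \<in> L) \<and>
     (\<forall>a\<in>L. \<forall>b\<in>L. mul A a b \<in> L) \<and>
     (\<forall>a\<in>L. \<exists>b\<in>L. mul A a b = zero A \<and> mul A b a = zero A)"

definition brace_ideal :: "('a, 'b) brace_str_scheme \<Rightarrow> 'a set \<Rightarrow> bool" where
  "brace_ideal A L \<longleftrightarrow> subbrace A L \<and>
     (\<forall>a\<in>carrier A. \<forall>z\<in>L. star A a z \<in> L \<and> star A z a \<in> L)"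

text \<open>T-brace: being an ideal is transitive. An ideal I of the subbrace J is an
  ideal of the brace with carrier J and the restricted operations.\<close>
definition T_brace :: "('a, 'b) brace_str_scheme \<Rightarrow> bool" where
  "T_brace A \<longleftrightarrow> is_brace A \<and>
     (\<forall>I J. brace_ideal (A\<lparr>carrier := J\<rparr>) I \<longrightarrow> brace_ideal A J \<longrightarrow> brace_ideal A I)"

definition star_center :: "('a, 'b) brace_str_scheme \<Rightarrow> 'a set" where
  "star_center A = {a \<in> carrier A. \<forall>x\<in>carrier A. star A a x = zero A \<and> star A x a = zero A}"

definition nat_smul :: "('a, 'b) brace_str_scheme \<Rightarrow> nat \<Rightarrow> 'a \<Rightarrow> 'a" where
  "nat_smul A n a = (add A a ^^ n) (zero A)"

definition add_torsion_free :: "('a, 'b) brace_str_scheme \<Rightarrow> 'a set \<Rightarrow> bool" where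
  "add_torsion_free A L \<longleftrightarrow> (\<forall>z\<in>L. \<forall>n::nat. n > 0 \<longrightarrow> nat_smul A n z = zero A \<longrightarrow> z = zero A)"

text \<open>Preimage in A of the star-center of the quotient A/Z:
  (a+Z) star (x+Z) = (a star x) + Z, so a+Z is star-central in A/Z iff
  a star x and x star a lie in Z for all x.\<close>
definition center_step :: "('a, 'b) brace_str_scheme \<Rightarrow> 'a set \<Rightarrow> 'a set" where
  "center_step A Z = {a \<in> carrier A. \<forall>x\<in>carrier A. star A a x \<in> Z \<and> star A x a \<in> Z}"

text \<open>Upper star-hypercenter: the union of the transfinite upper star-central series,
  i.e. the least set containing 0 that is closed under the step
  zeta_(alpha+1) = preimage of the star-center of A / zeta_alpha.\<close>
inductive_set star_hypercenter :: "('a, 'b) brace_str_scheme \<Rightarrow> 'a set"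
  for A :: "('a, 'b) brace_str_scheme" where
  base: "zero A \<in> star_hypercenter A"
| step: "a \<in> carrier A \<Longrightarrow> (\<And>x. x \<in> carrier A \<Longrightarrow> star A a x \<in> star_hypercenter A \<and> star A x a \<in> star_hypercenter A)
          \<Longrightarrow> a \<in> star_hypercenter A"

end

theory Submission
  imports Defs "HOL-Algebra.Generated_Groups"
begin

text \<open>
  Let \<open>a\<close> lie in the second term \<open>\<zeta>\<^sub>2\<close> of the upper \<open>\<star>\<close>-central series, so that
  \<open>c = a \<star> a\<close> is \<open>\<star>\<close>-central. The maps \<open>x \<mapsto> v \<star> x\<close> are additive, and so are the
  maps \<open>x \<mapsto> x \<star> v\<close> on \<open>\<zeta>\<^sub>2\<close>; hence, by torsion-freeness, \<open>a\<close> is \<open>\<star>\<close>-central as soon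
  as some nonzero multiple of it is. For an integer \<open>m\<close> and an additive subgroup \<open>W \<subseteq> \<zeta>\<close> containing \<open>m\<^sup>2c\<close>, the set
  \<open>m\<int>a + W\<close> is a subbrace; \<open>m\<int>a + \<zeta>\<close> is an ideal of the brace, and \<open>m\<int>a + W\<close> is an ideal of
  \<open>m\<int>a + \<zeta>\<close>, since all \<open>\<star>\<close>-products inside \<open>m\<int>a + \<zeta>\<close> lie in \<open>m\<^sup>2\<int>c\<close>. In a T-brace
  \<open>m\<int>a + W\<close> is therefore an ideal of the whole brace.

  With \<open>m = 2\<close> and \<open>W = \<int>4c\<close> this puts \<open>a \<star> 2a = 2c\<close> into \<open>2\<int>a + \<int>4c\<close>: either a nonzero
  multiple of \<open>a\<close> is central, or \<open>2c = 4kc\<close> and hence \<open>c = 0\<close>. Then \<open>m = 1\<close>, \<open>W = 0\<close> makes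
  \<open>\<int>a\<close> an ideal, so \<open>a \<star> x\<close> and \<open>x \<star> a\<close> lie in \<open>\<int>a \<inter> \<zeta> = 0\<close> unless \<open>a\<close> is central.
  Thus \<open>\<zeta>\<^sub>2 = \<zeta>\<close> and the upper \<open>\<star>\<close>-central series stops at \<open>\<zeta>\<close>.
\<close>

lemma star_carrier_update [simp]: "star (B\<lparr>brace_str.carrier := J\<rparr>) = star B"
  by (simp add: star_def fun_eq_iff)

locale brace =
  fixes A :: "('a, 'b) brace_str_scheme"
  assumes is_brace: "is_brace A"
begin

abbreviation G :: "'a set" where "G \<equiv> brace_str.carrier A"
abbreviation add_op (infixl "\<oplus>" 65) where "x \<oplus> y \<equiv> add A x y"
abbreviation neg_op ("\<ominus> _" [81] 80) where "\<ominus> x \<equiv> neg A x"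
abbreviation mul_op (infixl "\<odot>" 70) where "x \<odot> y \<equiv> mul A x y"
abbreviation star_op (infixl "\<star>" 70) where "x \<star> y \<equiv> star A x y"
abbreviation zero_el ("\<zero>") where "\<zero> \<equiv> zero A"

lemma zero_closed [simp]: "\<zero> \<in> G"
  and add_closed [simp]: "x \<in> G \<Longrightarrow> y \<in> G \<Longrightarrow> x \<oplus> y \<in> G"
  and neg_closed [simp]: "x \<in> G \<Longrightarrow> \<ominus> x \<in> G"
  and mul_closed [simp]: "x \<in> G \<Longrightarrow> y \<in> G \<Longrightarrow> x \<odot> y \<in> G"
  and add_assoc: "x \<in> G \<Longrightarrow> y \<in> G \<Longrightarrow> z \<in> G \<Longrightarrow> x \<oplus> y \<oplus> z = x \<oplus> (y \<oplus> z)"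
  and add_comm: "x \<in> G \<Longrightarrow> y \<in> G \<Longrightarrow> x \<oplus> y = y \<oplus> x"
  and add_zero [simp]: "x \<in> G \<Longrightarrow> x \<oplus> \<zero> = x"
  and add_neg [simp]: "x \<in> G \<Longrightarrow> x \<oplus> \<ominus> x = \<zero>"
  and mul_assoc: "x \<in> G \<Longrightarrow> y \<in> G \<Longrightarrow> z \<in> G \<Longrightarrow> x \<odot> y \<odot> z = x \<odot> (y \<odot> z)"
  and mul_zero [simp]: "x \<in> G \<Longrightarrow> x \<odot> \<zero> = x"
  and zero_mul [simp]: "x \<in> G \<Longrightarrow> \<zero> \<odot> x = x"
  and mul_inverse: "x \<in> G \<Longrightarrow> \<exists>y\<in>G. x \<odot> y = \<zero> \<and> y \<odot> x = \<zero>"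
  and mul_add: "x \<in> G \<Longrightarrow> y \<in> G \<Longrightarrow> z \<in> G \<Longrightarrow> x \<odot> (y \<oplus> z) = x \<odot> y \<oplus> x \<odot> z \<oplus> \<ominus> x"
  using is_brace unfolding is_brace_def by blast+

lemma zero_add [simp]: "x \<in> G \<Longrightarrow> \<zero> \<oplus> x = x"
  by (simp add: add_comm[of \<zero> x])

lemma mul_eq_zero_commute:
  assumes "x \<in> G" "y \<in> G" "x \<odot> y = \<zero>"
  shows "y \<odot> x = \<zero>"
proof -
  obtain x' where x': "x' \<in> G" "x' \<odot> x = \<zero>"
    using mul_inverse[OF assms(1)] by blast
  have "y = x' \<odot> x \<odot> y"
    using x' assms by simp
  also have "\<dots> = x' \<odot> (x \<odot> y)"
    using x'(1) assms(1,2) by (rule mul_assoc)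
  also have "\<dots> = x'"
    using x' assms by simp
  finally show ?thesis
    using x' by simp
qed

definition additive_group :: "'a monoid" where
  "additive_group = \<lparr>carrier = G, mult = add A, one = \<zero>\<rparr>"

lemma additive_group_simps [simp]:
  "carrier additive_group = G" "mult additive_group = add A" "one additive_group = \<zero>"
  by (simp_all add: additive_group_def)

sublocale additive: comm_group additive_group
proof (rule comm_groupI)
  fix x assume "x \<in> carrier additive_group"
  then show "\<exists>y\<in>carrier additive_group. y \<otimes>\<^bsub>additive_group\<^esub> x = \<one>\<^bsub>additive_group\<^esub>"
    by (intro bexI[of _ "\<ominus> x"]) (simp_all add: add_comm)
qed (auto simp: add_assoc intro: add_comm)

lemma inv_additive [simp]: "x \<in> G \<Longrightarrow> inv\<^bsub>additive_group\<^esub> x = \<ominus> x"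
  by (rule additive.inv_equality) (simp_all add: add_comm)

lemma add_left_comm: "x \<in> G \<Longrightarrow> y \<in> G \<Longrightarrow> z \<in> G \<Longrightarrow> x \<oplus> (y \<oplus> z) = y \<oplus> (x \<oplus> z)"
  using additive.m_lcomm by simp

lemmas add_ac = add_assoc add_comm add_left_comm

lemma neg_add_self [simp]: "x \<in> G \<Longrightarrow> \<ominus> x \<oplus> x = \<zero>"
  by (simp add: add_comm[of "\<ominus> x"])

lemma add_neg_cancel_left [simp]: "x \<in> G \<Longrightarrow> y \<in> G \<Longrightarrow> x \<oplus> (\<ominus> x \<oplus> y) = y"
  by (simp add: add_assoc[symmetric])

lemma neg_unique: "x \<in> G \<Longrightarrow> y \<in> G \<Longrightarrow> x \<oplus> y = \<zero> \<Longrightarrow> \<ominus> x = y"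
  using additive.inv_equality[of y x] by (simp add: add_comm)

lemma neg_zero [simp]: "\<ominus> \<zero> = \<zero>"
  and neg_add [simp]: "x \<in> G \<Longrightarrow> y \<in> G \<Longrightarrow> \<ominus> (x \<oplus> y) = \<ominus> x \<oplus> \<ominus> y"
  using additive.inv_one additive.inv_mult[of x y] by simp_all

lemma subgroup_additive_iff:
  "subgroup H additive_group \<longleftrightarrow>
     H \<subseteq> G \<and> \<zero> \<in> H \<and> (\<forall>x\<in>H. \<forall>y\<in>H. x \<oplus> y \<in> H) \<and> (\<forall>x\<in>H. \<ominus> x \<in> H)"
  by (auto simp: subgroup_def subset_iff)

abbreviation int_mult :: "int \<Rightarrow> 'a \<Rightarrow> 'a" (infixr "\<cdot>" 75)
  where "i \<cdot> x \<equiv> x [^]\<^bsub>additive_group\<^esub> i"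

lemma int_mult_closed [simp]: "x \<in> G \<Longrightarrow> i \<cdot> x \<in> G"
  and int_mult_add: "x \<in> G \<Longrightarrow> (i + j) \<cdot> x = i \<cdot> x \<oplus> j \<cdot> x"
  and int_mult_neg: "x \<in> G \<Longrightarrow> (- i) \<cdot> x = \<ominus> (i \<cdot> x)"
  and int_mult_diff: "x \<in> G \<Longrightarrow> (i - j) \<cdot> x = i \<cdot> x \<oplus> \<ominus> (j \<cdot> x)"
  and int_mult_int_mult: "x \<in> G \<Longrightarrow> i \<cdot> j \<cdot> x = (j * i) \<cdot> x"
  using additive.int_pow_closed[of x i] additive.int_pow_mult[of x i j] additive.int_pow_neg[of x i]
    additive.int_pow_diff[of x i j] additive.int_pow_closed[of x j] additive.int_pow_pow[of x j i]
  by simp_all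

lemma int_mult_additive_on_subgroup:
  assumes H: "subgroup H additive_group"
    and f: "\<And>x. x \<in> H \<Longrightarrow> f x \<in> G" "\<And>x y. x \<in> H \<Longrightarrow> y \<in> H \<Longrightarrow> f (x \<oplus> y) = f x \<oplus> f y"
    and x: "x \<in> H"
  shows "f (i \<cdot> x) = i \<cdot> f x"
proof -
  have "f \<in> hom (additive_group\<lparr>carrier := H\<rparr>) additive_group"
    using f by (auto simp: hom_def)
  then have "f (x [^]\<^bsub>additive_group\<lparr>carrier := H\<rparr>\<^esub> i) = i \<cdot> f x"
    using x additive.subgroup_imp_group[OF H] by (simp add: hom_int_pow)
  then show ?thesis
    by (simp add: additive.int_pow_consistent[OF H x])
qed

lemma star_closed [simp]: "x \<in> G \<Longrightarrow> y \<in> G \<Longrightarrow> x \<star> y \<in> G"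
  by (simp add: star_def)

lemma star_zero_right [simp]: "u \<in> G \<Longrightarrow> u \<star> \<zero> = \<zero>"
  and star_zero_left [simp]: "u \<in> G \<Longrightarrow> \<zero> \<star> u = \<zero>"
  by (simp_all add: star_def)

lemma mul_eq_add_star: "x \<in> G \<Longrightarrow> y \<in> G \<Longrightarrow> x \<odot> y = x \<oplus> y \<oplus> x \<star> y"
  by (simp add: star_def add_ac)

lemma star_add_right: "u \<in> G \<Longrightarrow> x \<in> G \<Longrightarrow> y \<in> G \<Longrightarrow> u \<star> (x \<oplus> y) = u \<star> x \<oplus> u \<star> y"
  by (simp add: star_def mul_add add_ac)

lemma star_int_mult_right: "u \<in> G \<Longrightarrow> x \<in> G \<Longrightarrow> u \<star> (i \<cdot> x) = i \<cdot> (u \<star> x)"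
  by (rule int_mult_additive_on_subgroup[OF additive.subgroup_self]) (simp_all add: star_add_right)

lemma star_neg_right: "u \<in> G \<Longrightarrow> x \<in> G \<Longrightarrow> u \<star> \<ominus> x = \<ominus> (u \<star> x)"
  using star_int_mult_right[of u x "-1"] by (simp add: int_mult_neg)

lemma star_mul_left:
  assumes "u \<in> G" "w \<in> G" "v \<in> G"
  shows "(u \<odot> w) \<star> v = u \<star> v \<oplus> w \<star> v \<oplus> u \<star> (w \<star> v)"
proof -
  have "u \<odot> w \<odot> v = u \<odot> (w \<oplus> v \<oplus> w \<star> v)"
    using assms by (simp add: mul_assoc mul_eq_add_star[of w v])
  also have "\<dots> = u \<odot> w \<oplus> u \<odot> v \<oplus> u \<odot> (w \<star> v) \<oplus> \<ominus> u \<oplus> \<ominus> u"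
    using assms by (simp add: mul_add add_assoc)
  finally have "(u \<odot> w) \<star> v =
      (u \<odot> w \<oplus> u \<odot> v \<oplus> u \<odot> (w \<star> v) \<oplus> \<ominus> u \<oplus> \<ominus> u \<oplus> \<ominus> (u \<odot> w) \<oplus> \<ominus> v) \<oplus> (w \<star> v \<oplus> \<ominus> (w \<star> v))"
    using assms by (simp add: star_def[of A "u \<odot> w" v])
  also have "\<dots> = (u \<odot> v \<oplus> \<ominus> u \<oplus> \<ominus> v) \<oplus> w \<star> v \<oplus> (u \<odot> (w \<star> v) \<oplus> \<ominus> u \<oplus> \<ominus> (w \<star> v))
      \<oplus> (u \<odot> w \<oplus> \<ominus> (u \<odot> w))"
    using assms by (simp only: add_ac add_closed neg_closed mul_closed star_closed)
  finally show ?thesis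
    using assms by (simp add: star_def[of A u v] star_def[of A u "w \<star> v"])
qed

abbreviation star_center_of ("\<zeta>") where "\<zeta> \<equiv> star_center A"
abbreviation second_star_center ("\<zeta>\<^sub>2") where "\<zeta>\<^sub>2 \<equiv> center_step A \<zeta>"

lemma star_center_closed: "z \<in> \<zeta> \<Longrightarrow> z \<in> G"
  and star_center_star_left [simp]: "z \<in> \<zeta> \<Longrightarrow> v \<in> G \<Longrightarrow> z \<star> v = \<zero>"
  and star_center_star_right [simp]: "z \<in> \<zeta> \<Longrightarrow> v \<in> G \<Longrightarrow> v \<star> z = \<zero>"
  by (simp_all add: star_center_def)

lemma add_star_center_star:
  assumes "u \<in> G" "z \<in> \<zeta>" "v \<in> G"
  shows "(u \<oplus> z) \<star> v = u \<star> v"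
proof -
  have "u \<oplus> z = u \<odot> z"
    using assms by (simp add: mul_eq_add_star star_center_closed)
  then show ?thesis
    using assms by (simp add: star_mul_left star_center_closed)
qed

lemma star_centerI: "z \<in> G \<Longrightarrow> (\<And>v. v \<in> G \<Longrightarrow> z \<star> v = \<zero> \<and> v \<star> z = \<zero>) \<Longrightarrow> z \<in> \<zeta>"
  unfolding star_center_def by blast

lemma star_center_add: "z \<in> \<zeta> \<Longrightarrow> z' \<in> \<zeta> \<Longrightarrow> z \<oplus> z' \<in> \<zeta>"
  by (intro star_centerI) (simp_all add: add_star_center_star star_add_right star_center_closed)

lemma star_center_neg:
  assumes z: "z \<in> \<zeta>"
  shows "\<ominus> z \<in> \<zeta>"
proof (intro star_centerI conjI)
  fix v assume v: "v \<in> G"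
  show "(\<ominus> z) \<star> v = \<zero>"
    using add_star_center_star[of "\<ominus> z" z v] z v by (simp add: star_center_closed)
  show "v \<star> \<ominus> z = \<zero>"
    using z v by (simp add: star_neg_right star_center_closed)
qed (simp add: z star_center_closed)

lemma zero_star_center: "\<zero> \<in> \<zeta>"
  by (rule star_centerI) simp_all

lemma subgroup_star_center: "subgroup \<zeta> additive_group"
  by (auto simp: subgroup_additive_iff star_center_closed star_center_add star_center_neg
      zero_star_center)

lemma center_stepI: "a \<in> G \<Longrightarrow> (\<And>v. v \<in> G \<Longrightarrow> a \<star> v \<in> \<zeta> \<and> v \<star> a \<in> \<zeta>) \<Longrightarrow> a \<in> \<zeta>\<^sub>2"
  unfolding center_step_def by blast

lemma center_step_closed: "a \<in> \<zeta>\<^sub>2 \<Longrightarrow> a \<in> G"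
  and center_step_star_left: "a \<in> \<zeta>\<^sub>2 \<Longrightarrow> v \<in> G \<Longrightarrow> a \<star> v \<in> \<zeta>"
  and center_step_star_right: "a \<in> \<zeta>\<^sub>2 \<Longrightarrow> v \<in> G \<Longrightarrow> v \<star> a \<in> \<zeta>"
  by (simp_all add: center_step_def)

lemma star_add_left_center_step:
  assumes w: "w \<in> \<zeta>\<^sub>2" "w' \<in> \<zeta>\<^sub>2" and v: "v \<in> G"
  shows "(w \<oplus> w') \<star> v = w \<star> v \<oplus> w' \<star> v"
proof -
  have G: "w \<in> G" "w' \<in> G"
    using w by (simp_all add: center_step_closed)
  have "\<ominus> (w \<star> w') \<in> \<zeta>"
    using center_step_star_left[OF w(1) G(2)] by (rule star_center_neg)
  moreover have "w \<oplus> w' = w \<odot> w' \<oplus> \<ominus> (w \<star> w')"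
    using G by (simp add: mul_eq_add_star add_assoc)
  ultimately have "(w \<oplus> w') \<star> v = (w \<odot> w') \<star> v"
    using G v by (simp add: add_star_center_star)
  then show ?thesis
    using G w v by (simp add: star_mul_left center_step_star_left)
qed

lemma neg_star_left_center_step:
  assumes w: "w \<in> \<zeta>\<^sub>2" and v: "v \<in> G"
  shows "(\<ominus> w) \<star> v = \<ominus> (w \<star> v)"
proof -
  have G: "w \<in> G"
    using w by (rule center_step_closed)
  obtain w' where w': "w' \<in> G" "w \<odot> w' = \<zero>" "w' \<odot> w = \<zero>"
    using mul_inverse[OF G] by blast
  have "\<zero> = (w' \<odot> w) \<star> v"
    using w' v by simp
  also have "\<dots> = w' \<star> v \<oplus> w \<star> v \<oplus> w' \<star> (w \<star> v)"
    using w'(1) G v by (rule star_mul_left)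
  also have "\<dots> = w' \<star> v \<oplus> w \<star> v"
    using G w w' v by (simp add: center_step_star_left)
  finally have inv_star: "\<ominus> (w \<star> v) = w' \<star> v"
    using G w' v by (intro neg_unique) (simp_all add: add_comm)
  have "w \<oplus> (w' \<oplus> w \<star> w') = \<zero>"
    using G w' by (simp flip: add_assoc mul_eq_add_star)
  then have "\<ominus> w = w' \<oplus> w \<star> w'"
    using G w' by (intro neg_unique) simp_all
  then show ?thesis
    using add_star_center_star w w' v inv_star by (simp add: center_step_star_left)
qed

lemma center_step_add: "w \<in> \<zeta>\<^sub>2 \<Longrightarrow> w' \<in> \<zeta>\<^sub>2 \<Longrightarrow> w \<oplus> w' \<in> \<zeta>\<^sub>2"
  by (intro center_stepI)
    (simp_all add: star_add_left_center_step star_add_right center_step_closed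
      center_step_star_left center_step_star_right star_center_add)

lemma center_step_neg: "w \<in> \<zeta>\<^sub>2 \<Longrightarrow> \<ominus> w \<in> \<zeta>\<^sub>2"
  by (intro center_stepI)
    (simp_all add: neg_star_left_center_step star_neg_right center_step_closed
      center_step_star_left center_step_star_right star_center_neg)

lemma zero_center_step: "\<zero> \<in> \<zeta>\<^sub>2"
  by (rule center_stepI) (simp_all add: zero_star_center)

lemma subgroup_center_step: "subgroup \<zeta>\<^sub>2 additive_group"
  by (auto simp: subgroup_additive_iff center_step_closed center_step_add center_step_neg
      zero_center_step)

lemma int_mult_star_left_center_step: "w \<in> \<zeta>\<^sub>2 \<Longrightarrow> v \<in> G \<Longrightarrow> (i \<cdot> w) \<star> v = i \<cdot> (w \<star> v)"
  by (rule int_mult_additive_on_subgroup[OF subgroup_center_step, where f = "\<lambda>x. x \<star> v"])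
    (simp_all add: star_add_left_center_step center_step_closed)

lemma nat_smul_eq_nat_pow: "x \<in> G \<Longrightarrow> nat_smul A n x = x [^]\<^bsub>additive_group\<^esub> n"
  using additive.nat_pow_closed[of x] by (induction n) (auto simp: nat_smul_def intro: add_comm)

lemma add_torsion_free_int_mult_eq_zero:
  assumes tf: "add_torsion_free A L" and z: "z \<in> L" "z \<in> G" and i: "i \<noteq> 0" "i \<cdot> z = \<zero>"
  shows "z = \<zero>"
proof -
  have "\<bar>i\<bar> \<cdot> z = \<zero>"
    using i z by (cases "i \<ge> 0") (simp_all add: int_mult_neg)
  then have "nat_smul A (nat \<bar>i\<bar>) z = \<zero>"
    using z by (simp add: nat_smul_eq_nat_pow flip: int_pow_int)
  moreover have "nat \<bar>i\<bar> > 0"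
    using i by simp
  ultimately show ?thesis
    using tf z unfolding add_torsion_free_def by blast
qed

lemma center_step_in_star_center_of_int_mult:
  assumes tf: "add_torsion_free A \<zeta>" and a: "a \<in> \<zeta>\<^sub>2" and i: "i \<noteq> 0" "i \<cdot> a \<in> \<zeta>"
  shows "a \<in> \<zeta>"
proof (rule star_centerI)
  show "a \<in> G"
    using a by (rule center_step_closed)
  fix v assume v: "v \<in> G"
  have "i \<cdot> (a \<star> v) = (i \<cdot> a) \<star> v" "i \<cdot> (v \<star> a) = v \<star> (i \<cdot> a)"
    using a v by (simp_all add: int_mult_star_left_center_step star_int_mult_right center_step_closed)
  then have "i \<cdot> (a \<star> v) = \<zero>" "i \<cdot> (v \<star> a) = \<zero>"
    using i(2) v by simp_all
  then show "a \<star> v = \<zero> \<and> v \<star> a = \<zero>"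
    using a v i(1) add_torsion_free_int_mult_eq_zero[OF tf]
    by (meson center_step_star_left center_step_star_right star_center_closed)
qed

definition multiples_plus :: "'a \<Rightarrow> int \<Rightarrow> 'a set \<Rightarrow> 'a set" where
  "multiples_plus a m W = {i \<cdot> a \<oplus> w | i w. m dvd i \<and> w \<in> W}"

lemma multiples_plusI: "m dvd i \<Longrightarrow> w \<in> W \<Longrightarrow> i \<cdot> a \<oplus> w \<in> multiples_plus a m W"
  unfolding multiples_plus_def by blast

lemma multiples_plusE:
  assumes "x \<in> multiples_plus a m W"
  obtains i w where "m dvd i" "w \<in> W" "x = i \<cdot> a \<oplus> w"
  using assms unfolding multiples_plus_def by blast

lemma multiples_plus_mono: "W \<subseteq> W' \<Longrightarrow> multiples_plus a m W \<subseteq> multiples_plus a m W'"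
  unfolding multiples_plus_def by blast

lemma mem_multiples_plusI: "a \<in> G \<Longrightarrow> w \<in> W \<Longrightarrow> w \<in> G \<Longrightarrow> w \<in> multiples_plus a m W"
  using multiples_plusI[of m 0 w W a] by simp

lemma subgroup_multiples_plus:
  assumes W: "subgroup W additive_group" and a: "a \<in> G"
  shows "subgroup (multiples_plus a m W) additive_group"
proof -
  have W_closed: "\<zero> \<in> W" "\<And>w. w \<in> W \<Longrightarrow> w \<in> G" "\<And>w. w \<in> W \<Longrightarrow> \<ominus> w \<in> W"
    "\<And>w w'. w \<in> W \<Longrightarrow> w' \<in> W \<Longrightarrow> w \<oplus> w' \<in> W"
    using W by (auto simp: subgroup_additive_iff)
  have "x \<oplus> y \<in> multiples_plus a m W" "\<ominus> x \<in> multiples_plus a m W"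
    if xy_mem: "x \<in> multiples_plus a m W" "y \<in> multiples_plus a m W" for x y
  proof -
    obtain i j w w' where ij: "m dvd i" "m dvd j" and w: "w \<in> W" "w' \<in> W"
      and xy: "x = i \<cdot> a \<oplus> w" "y = j \<cdot> a \<oplus> w'"
      using xy_mem by (elim multiples_plusE)
    have "x \<oplus> y = (i + j) \<cdot> a \<oplus> (w \<oplus> w')" "\<ominus> x = (- i) \<cdot> a \<oplus> \<ominus> w"
      using a w W_closed(2) by (simp_all add: xy int_mult_add int_mult_neg add_ac)
    then show "x \<oplus> y \<in> multiples_plus a m W" "\<ominus> x \<in> multiples_plus a m W"
      using ij w W_closed(3,4) by (simp_all add: multiples_plusI)
  qed
  moreover have "multiples_plus a m W \<subseteq> G"
    using a W_closed(2) by (auto elim!: multiples_plusE)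
  moreover have "\<zero> \<in> multiples_plus a m W"
    using a W_closed(1) by (intro mem_multiples_plusI) simp_all
  ultimately show ?thesis
    unfolding subgroup_additive_iff by blast
qed

context
  fixes a assumes a: "a \<in> \<zeta>\<^sub>2"
begin

lemma star_multiples_plus:
  assumes "w \<in> \<zeta>" "w' \<in> \<zeta>"
  shows "(i \<cdot> a \<oplus> w) \<star> (j \<cdot> a \<oplus> w') = (i * j) \<cdot> (a \<star> a)"
proof -
  have G: "a \<in> G" "w \<in> G" "w' \<in> G"
    using a assms by (simp_all add: center_step_closed star_center_closed)
  have "(i \<cdot> a \<oplus> w) \<star> (j \<cdot> a \<oplus> w') = i \<cdot> (a \<star> (j \<cdot> a \<oplus> w'))"
    using a assms G by (simp add: add_star_center_star int_mult_star_left_center_step)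
  also have "\<dots> = i \<cdot> j \<cdot> (a \<star> a)"
    using assms G by (simp add: star_add_right star_int_mult_right)
  finally show ?thesis
    using G by (simp add: int_mult_int_mult mult.commute)
qed

lemma mul_multiples_plus:
  assumes "w \<in> \<zeta>" "w' \<in> \<zeta>"
  shows "(i \<cdot> a \<oplus> w) \<odot> (j \<cdot> a \<oplus> w') = (i + j) \<cdot> a \<oplus> (w \<oplus> w' \<oplus> (i * j) \<cdot> (a \<star> a))"
proof -
  have G: "a \<in> G" "w \<in> G" "w' \<in> G"
    using a assms by (simp_all add: center_step_closed star_center_closed)
  have "(i \<cdot> a \<oplus> w) \<odot> (j \<cdot> a \<oplus> w') = (i \<cdot> a \<oplus> w) \<oplus> (j \<cdot> a \<oplus> w') \<oplus> (i * j) \<cdot> (a \<star> a)"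
    unfolding star_multiples_plus[OF assms, symmetric] using G by (intro mul_eq_add_star) simp_all
  also have "\<dots> = (i + j) \<cdot> a \<oplus> (w \<oplus> w' \<oplus> (i * j) \<cdot> (a \<star> a))"
    using G by (simp add: int_mult_add add_ac)
  finally show ?thesis .
qed

lemma mul_multiples_plus_inverse:
  assumes w: "w \<in> \<zeta>"
  shows "(i \<cdot> a \<oplus> w) \<odot> ((- i) \<cdot> a \<oplus> (\<ominus> w \<oplus> (i * i) \<cdot> (a \<star> a))) = \<zero>"
proof -
  have G: "a \<in> G" "w \<in> G"
    using a w by (simp_all add: center_step_closed star_center_closed)
  have "\<ominus> w \<oplus> (i * i) \<cdot> (a \<star> a) \<in> \<zeta>"
    using w additive.subgroup_int_pow_closed[OF subgroup_star_center center_step_star_left[OF a G(1)]]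
    by (intro star_center_add star_center_neg)
  then have "(i \<cdot> a \<oplus> w) \<odot> ((- i) \<cdot> a \<oplus> (\<ominus> w \<oplus> (i * i) \<cdot> (a \<star> a))) =
      (i + - i) \<cdot> a \<oplus> (w \<oplus> (\<ominus> w \<oplus> (i * i) \<cdot> (a \<star> a)) \<oplus> (i * - i) \<cdot> (a \<star> a))"
    by (rule mul_multiples_plus[OF w])
  also have "\<dots> = \<zero>"
    using G by (simp add: int_mult_neg)
  finally show ?thesis .
qed

lemma int_mult_star_self_mem:
  assumes W: "subgroup W additive_group" and c: "(m * m) \<cdot> (a \<star> a) \<in> W"
    and ij: "m dvd i" "m dvd j"
  shows "(i * j) \<cdot> (a \<star> a) \<in> W"
proof -
  obtain k l where "i = m * k" "j = m * l"
    using ij by (elim dvdE)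
  then have "(i * j) \<cdot> (a \<star> a) = (k * l) \<cdot> (m * m) \<cdot> (a \<star> a)"
    using a by (simp add: int_mult_int_mult center_step_closed mult_ac)
  then show ?thesis
    using additive.subgroup_int_pow_closed[OF W c] by simp
qed

lemma subbrace_multiples_plus:
  assumes W: "subgroup W additive_group" "W \<subseteq> \<zeta>" and c: "(m * m) \<cdot> (a \<star> a) \<in> W"
  shows "subbrace A (multiples_plus a m W)"
proof -
  have S: "subgroup (multiples_plus a m W) additive_group"
    using W(1) center_step_closed[OF a] by (rule subgroup_multiples_plus)
  then have SG: "x \<in> G" if "x \<in> multiples_plus a m W" for x
    using that by (auto simp: subgroup_additive_iff)
  have W_closed: "\<And>w. w \<in> W \<Longrightarrow> \<ominus> w \<in> W" "\<And>w w'. w \<in> W \<Longrightarrow> w' \<in> W \<Longrightarrow> w \<oplus> w' \<in> W"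
    using W(1) by (auto simp: subgroup_additive_iff)
  have mul: "x \<odot> y \<in> multiples_plus a m W"
    if xy_mem: "x \<in> multiples_plus a m W" "y \<in> multiples_plus a m W" for x y
  proof -
    obtain i j w w' where ij: "m dvd i" "m dvd j" and w: "w \<in> W" "w' \<in> W"
      and xy: "x = i \<cdot> a \<oplus> w" "y = j \<cdot> a \<oplus> w'"
      using xy_mem by (elim multiples_plusE)
    have "w \<in> \<zeta>" "w' \<in> \<zeta>"
      using w W(2) by auto
    then have "x \<odot> y = (i + j) \<cdot> a \<oplus> (w \<oplus> w' \<oplus> (i * j) \<cdot> (a \<star> a))"
      unfolding xy by (rule mul_multiples_plus)
    then show ?thesis
      using ij w W_closed int_mult_star_self_mem[OF W(1) c ij] by (simp add: multiples_plusI)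
  qed
  have inverse: "\<exists>y\<in>multiples_plus a m W. x \<odot> y = \<zero> \<and> y \<odot> x = \<zero>"
    if x_mem: "x \<in> multiples_plus a m W" for x
  proof -
    obtain i w where i: "m dvd i" and w: "w \<in> W" and x: "x = i \<cdot> a \<oplus> w"
      using x_mem by (elim multiples_plusE)
    define y where "y = (- i) \<cdot> a \<oplus> (\<ominus> w \<oplus> (i * i) \<cdot> (a \<star> a))"
    have y_mem: "y \<in> multiples_plus a m W"
      unfolding y_def using i w W_closed int_mult_star_self_mem[OF W(1) c i i]
      by (intro multiples_plusI) simp_all
    have "w \<in> \<zeta>"
      using w W(2) by auto
    then have "x \<odot> y = \<zero>"
      unfolding x y_def by (rule mul_multiples_plus_inverse)
    moreover have "y \<odot> x = \<zero>"
      using SG[OF x_mem] SG[OF y_mem] \<open>x \<odot> y = \<zero>\<close> by (rule mul_eq_zero_commute)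
    ultimately show ?thesis
      using y_mem by blast
  qed
  show ?thesis
    unfolding subbrace_def using S mul inverse by (auto simp: subgroup_additive_iff)
qed

lemma brace_ideal_multiples_plus_star_center: "brace_ideal A (multiples_plus a m \<zeta>)"
proof -
  have aG: "a \<in> G"
    using a by (rule center_step_closed)
  have c: "(m * m) \<cdot> (a \<star> a) \<in> \<zeta>"
    using additive.subgroup_int_pow_closed[OF subgroup_star_center center_step_star_left[OF a aG]] .
  have "x \<star> y \<in> multiples_plus a m \<zeta> \<and> y \<star> x \<in> multiples_plus a m \<zeta>"
    if x: "x \<in> G" and y: "y \<in> multiples_plus a m \<zeta>" for x y
  proof -
    obtain i w where w: "w \<in> \<zeta>" and y_eq: "y = i \<cdot> a \<oplus> w"
      using y by (elim multiples_plusE)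
    have "x \<star> y = i \<cdot> (x \<star> a)" "y \<star> x = i \<cdot> (a \<star> x)"
      using a aG x w
      by (simp_all add: y_eq star_add_right star_int_mult_right add_star_center_star
          int_mult_star_left_center_step star_center_closed)
    moreover have "i \<cdot> (x \<star> a) \<in> \<zeta>" "i \<cdot> (a \<star> x) \<in> \<zeta>"
      using additive.subgroup_int_pow_closed[OF subgroup_star_center] a x
      by (simp_all add: center_step_star_left center_step_star_right)
    ultimately show ?thesis
      using aG by (simp add: mem_multiples_plusI star_center_closed)
  qed
  then show ?thesis
    unfolding brace_ideal_def using subbrace_multiples_plus[OF subgroup_star_center subset_refl c] by blast
qed

lemma brace_ideal_multiples_plus_in_multiples_plus_star_center:
  assumes W: "subgroup W additive_group" "W \<subseteq> \<zeta>" and c: "(m * m) \<cdot> (a \<star> a) \<in> W"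
  shows "brace_ideal (A\<lparr>brace_str.carrier := multiples_plus a m \<zeta>\<rparr>) (multiples_plus a m W)"
proof -
  have aG: "a \<in> G"
    using a by (rule center_step_closed)
  have "x \<star> y \<in> multiples_plus a m W \<and> y \<star> x \<in> multiples_plus a m W"
    if x: "x \<in> multiples_plus a m \<zeta>" and y: "y \<in> multiples_plus a m W" for x y
  proof -
    obtain i w where i: "m dvd i" and w: "w \<in> \<zeta>" and x_eq: "x = i \<cdot> a \<oplus> w"
      using x by (elim multiples_plusE)
    obtain j w' where j: "m dvd j" and w': "w' \<in> W" and y_eq: "y = j \<cdot> a \<oplus> w'"
      using y by (elim multiples_plusE)
    have "x \<star> y = (i * j) \<cdot> (a \<star> a)" "y \<star> x = (i * j) \<cdot> (a \<star> a)"
      using w w' W(2) by (auto simp: x_eq y_eq star_multiples_plus mult.commute)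
    moreover have "(i * j) \<cdot> (a \<star> a) \<in> W"
      using int_mult_star_self_mem[OF W(1) c i j] .
    ultimately show ?thesis
      using aG W(1) by (simp add: mem_multiples_plusI subgroup_additive_iff subset_iff)
  qed
  moreover have "subbrace (A\<lparr>brace_str.carrier := multiples_plus a m \<zeta>\<rparr>) (multiples_plus a m W)"
    using subbrace_multiples_plus[OF W c] multiples_plus_mono[OF W(2)] unfolding subbrace_def by simp
  ultimately show ?thesis
    unfolding brace_ideal_def by simp
qed

lemma brace_ideal_multiples_plus:
  assumes T: "T_brace A" and W: "subgroup W additive_group" "W \<subseteq> \<zeta>" and c: "(m * m) \<cdot> (a \<star> a) \<in> W"
  shows "brace_ideal A (multiples_plus a m W)"
  using T brace_ideal_multiples_plus_in_multiples_plus_star_center[OF W c]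
    brace_ideal_multiples_plus_star_center
  unfolding T_brace_def by blast

lemma star_self_eq_zero_of_double_eq:
  assumes tf: "add_torsion_free A \<zeta>" and eq: "2 \<cdot> (a \<star> a) = i \<cdot> a \<oplus> (4 * k) \<cdot> (a \<star> a)"
  shows "a \<star> a = \<zero>"
proof -
  have aG: "a \<in> G"
    using a by (rule center_step_closed)
  have c: "a \<star> a \<in> \<zeta>"
    using center_step_star_left[OF a aG] .
  show ?thesis
  proof (cases "i = 0")
    case True
    then have "(2 - 4 * k) \<cdot> (a \<star> a) = \<zero>"
      using eq aG by (simp add: int_mult_diff)
    moreover have "2 - 4 * k \<noteq> 0"
      by presburger
    ultimately show ?thesis
      using add_torsion_free_int_mult_eq_zero[OF tf c star_closed[OF aG aG]] by blast
  next
    case False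
    have "i \<cdot> a = 2 \<cdot> (a \<star> a) \<oplus> \<ominus> ((4 * k) \<cdot> (a \<star> a))"
      using eq aG by (simp add: add_assoc)
    also have "\<dots> \<in> \<zeta>"
      using additive.subgroup_int_pow_closed[OF subgroup_star_center c]
      by (intro star_center_add star_center_neg)
    finally have "a \<in> \<zeta>"
      using center_step_in_star_center_of_int_mult[OF tf a False] by blast
    then show ?thesis
      using aG by simp
  qed
qed

lemma star_self_eq_zero:
  assumes T: "T_brace A" and tf: "add_torsion_free A \<zeta>"
  shows "a \<star> a = \<zero>"
proof -
  have aG: "a \<in> G"
    using a by (rule center_step_closed)
  have c4: "4 \<cdot> (a \<star> a) \<in> \<zeta>"
    using additive.subgroup_int_pow_closed[OF subgroup_star_center center_step_star_left[OF a aG]] .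
  define W where "W = generate additive_group {4 \<cdot> (a \<star> a)}"
  have W: "subgroup W additive_group" "W \<subseteq> \<zeta>" "(2 * 2) \<cdot> (a \<star> a) \<in> W"
    unfolding W_def using aG c4
    by (simp_all add: additive.generate_is_subgroup additive.generate_subgroup_incl
        subgroup_star_center generate.incl)
  have "2 \<cdot> a \<in> multiples_plus a 2 W"
    using multiples_plusI[of 2 2 \<zero> W a] W(1) aG by (simp add: subgroup_additive_iff)
  then have "2 \<cdot> (a \<star> a) \<in> multiples_plus a 2 W"
    using brace_ideal_multiples_plus[OF T W] aG unfolding brace_ideal_def
    by (auto simp flip: star_int_mult_right)
  then obtain i w where "2 \<cdot> (a \<star> a) = i \<cdot> a \<oplus> w" and "w \<in> W"
    by (elim multiples_plusE)
  moreover obtain k where "w = (4 * k) \<cdot> (a \<star> a)"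
    using \<open>w \<in> W\<close> aG unfolding W_def by (auto simp: additive.generate_pow int_mult_int_mult)
  ultimately show ?thesis
    using star_self_eq_zero_of_double_eq[OF tf] by blast
qed

lemma center_step_in_star_center:
  assumes T: "T_brace A" and tf: "add_torsion_free A \<zeta>"
  shows "a \<in> \<zeta>"
proof (cases "\<exists>i. i \<noteq> 0 \<and> i \<cdot> a \<in> \<zeta>")
  case True
  then show ?thesis
    using center_step_in_star_center_of_int_mult[OF tf a] by blast
next
  case False
  have aG: "a \<in> G"
    using a by (rule center_step_closed)
  have I: "brace_ideal A (multiples_plus a 1 {\<zero>})"
    using brace_ideal_multiples_plus[OF T _ _, of "{\<zero>}" 1] additive.triv_subgroup
      star_self_eq_zero[OF T tf] zero_star_center
    by simp
  have "a \<in> multiples_plus a 1 {\<zero>}"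
    using multiples_plusI[of 1 1 \<zero> "{\<zero>}" a] aG by simp
  then have in_I: "a \<star> v \<in> multiples_plus a 1 {\<zero>}" "v \<star> a \<in> multiples_plus a 1 {\<zero>}" if "v \<in> G" for v
    using I that unfolding brace_ideal_def by blast+
  have I_center: "y = \<zero>" if y: "y \<in> multiples_plus a 1 {\<zero>}" "y \<in> \<zeta>" for y
  proof -
    obtain i w where "w \<in> {\<zero>}" "y = i \<cdot> a \<oplus> w"
      using y(1) by (elim multiples_plusE)
    then have "y = i \<cdot> a"
      using aG by simp
    then show ?thesis
      using False y(2) by (cases "i = 0") auto
  qed
  show ?thesis
  proof (rule star_centerI)
    fix v assume v: "v \<in> G"
    show "a \<star> v = \<zero> \<and> v \<star> a = \<zero>"
      using I_center in_I[OF v] center_step_star_left[OF a v] center_step_star_right[OF a v] by blast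
  qed (rule aG)
qed

end

lemma center_step_star_center_eq:
  assumes "T_brace A" and "add_torsion_free A \<zeta>"
  shows "\<zeta>\<^sub>2 = \<zeta>"
  using center_step_in_star_center[OF _ assms] zero_star_center
  by (auto intro!: center_stepI simp: star_center_closed)

lemma star_hypercenter_eq_star_center:
  assumes "\<zeta>\<^sub>2 \<subseteq> \<zeta>"
  shows "star_hypercenter A = \<zeta>"
proof
  show "star_hypercenter A \<subseteq> \<zeta>"
  proof
    fix x assume "x \<in> star_hypercenter A"
    then show "x \<in> \<zeta>"
    proof (induction rule: star_hypercenter.induct)
      case base
      then show ?case
        by (rule zero_star_center)
    next
      case (step b)
      then have "b \<in> \<zeta>\<^sub>2"
        by (auto intro: center_stepI)
      then show ?case
        using assms by blast
    qed
  qed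
  show "\<zeta> \<subseteq> star_hypercenter A"
  proof
    fix z assume z: "z \<in> \<zeta>"
    show "z \<in> star_hypercenter A"
      using z by (intro star_hypercenter.step) (simp_all add: star_center_closed star_hypercenter.base)
  qed
qed

end

theorem theoremA:
  fixes A :: "('a, 'b) brace_str_scheme"
  assumes "T_brace A"
    and "add_torsion_free A (star_center A)"
  shows "star_hypercenter A = star_center A"
proof -
  interpret brace A
    using assms(1) by unfold_locales (simp add: T_brace_def)
  show ?thesis
    using center_step_star_center_eq[OF assms] by (intro star_hypercenter_eq_star_center) simp
qed

end
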